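(* Let $h(t)=\sqrt{1+\frac1t}$ and $H(t)=h(t)+\frac{1}{h(t)}$ for $t\in(0,\infty)$. Then for every integer $i\ge1$ and $t>0$, \[ h^{(i)}(t)=\frac{(-1)^i}{2^i t^{i+1}(1+t)^{i-1}h(t)}\sum_{k=0}^{i-1}a_{i,k}t^k,\qquad \Bigl[\frac{1}{h(t)}\Bigr]^{(i)}=\frac{(-1)^{i+1}}{2^i t^{i}(1+t)^{i}h(t)}\sum_{k=0}^{i-1}b_{i,k}t^k, \] \[ H^{(i)}(t)=\frac{(-1)^i}{2^i t^{i+1}(1+t)^{i}h(t)}\sum_{k=0}^{i-1}c_{i,k}t^k, \] where \[ a_{i,k}=\frac{(i-1)!\,i!\,(2i-2k-1)!!}{(i-k-1)!\,(i-k)!\,k!}2^k,\quad b_{i,k}=\frac{(i-1)!\,i!\,(2i-2k-3)!!}{(i-k-1)!\,(i-k)!\,k!}2^k,\quad c_{i,k}=\frac{(i-1)!\,(i+1)!\,(2i-2k-1)!!}{(i-k-1)!\,(i-k+1)!\,k!}2^k. \] Consequently, $h$ and $H$ are completely monotonic on $(0,\infty)$, and $\frac1h$ is a Bernstein function on $(0,\infty)$.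
   Context: Double factorials: $(2m-1)!!=1\cdot3\cdots(2m-1)$ for $m\ge1$, with $(-1)!!=1$. A function $f$ on an interval $I\subseteq\mathbb{R}$ is completely monotonic on $I$ if it has derivatives of all orders on $I$ and $(-1)^n f^{(n)}(t)\ge 0$ for all $t\in I$ and all integers $n\ge0$. A function $f:I\to[0,\infty)$ is a Bernstein function on $I$ if it has derivatives of all orders and $f'$ is completely monotonic on $I$. *)

theory Defs
  imports "HOL-Analysis.Analysis"
begin

text \<open>Odd double factorial: odd_dfact m = (2m-1)!! = 1*3*...*(2m-1), with odd_dfact 0 = (-1)!! = 1.\<close>
definition odd_dfact :: "nat \<Rightarrow> nat" where
  "odd_dfact m = (\<Prod>j<m. 2 * j + 1)"

definition completely_monotonic_on :: "real set \<Rightarrow> (real \<Rightarrow> real) \<Rightarrow> bool" where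
  "completely_monotonic_on I f \<longleftrightarrow>
     (\<forall>n. \<forall>t\<in>I. (deriv ^^ n) f differentiable (at t)) \<and>
     (\<forall>n. \<forall>t\<in>I. (-1) ^ n * (deriv ^^ n) f t \<ge> 0)"

definition bernstein_on :: "real set \<Rightarrow> (real \<Rightarrow> real) \<Rightarrow> bool" where
  "bernstein_on I f \<longleftrightarrow>
     (\<forall>t\<in>I. f t \<ge> 0) \<and>
     (\<forall>n. \<forall>t\<in>I. (deriv ^^ n) f differentiable (at t)) \<and>
     completely_monotonic_on I (deriv f)"

text \<open>Coefficients a_{i,k}, b_{i,k}, c_{i,k} (for 0 \<le> k \<le> i-1).
  (2i-2k-1)!! = odd_dfact (i-k), (2i-2k-3)!! = odd_dfact (i-k-1).\<close>
definition coeff_a :: "nat \<Rightarrow> nat \<Rightarrow> real" where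
  "coeff_a i k = fact (i - 1) * fact i * real (odd_dfact (i - k))
                 / (fact (i - k - 1) * fact (i - k) * fact k) * 2 ^ k"

definition coeff_b :: "nat \<Rightarrow> nat \<Rightarrow> real" where
  "coeff_b i k = fact (i - 1) * fact i * real (odd_dfact (i - k - 1))
                 / (fact (i - k - 1) * fact (i - k) * fact k) * 2 ^ k"

definition coeff_c :: "nat \<Rightarrow> nat \<Rightarrow> real" where
  "coeff_c i k = fact (i - 1) * fact (i + 1) * real (odd_dfact (i - k))
                 / (fact (i - k - 1) * fact (i - k + 1) * fact k) * 2 ^ k"

end

theory Submission
  imports Defs
begin

text \<open>
  On \<open>t > 0\<close> we have \<open>h t = t powr (-1/2) * (1 + t) powr (1/2)\<close>,
  \<open>1 / h t = t powr (1/2) * (1 + t) powr (-1/2)\<close> and \<open>H t = (1 + 2t) * t powr (-1/2) * (1 + t) powr (-1/2)\<close>.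
  Differentiating \<open>p t * t powr a * (1 + t) powr b\<close> gives
  \<open>(p' t * t * (1 + t) + p t * (a (1 + t) + b t)) * t powr (a - 1) * (1 + t) powr (b - 1)\<close>,
  so every derivative keeps this shape, with a polynomial factor obeying a first order recurrence.
  Coefficientwise this is a three-term recurrence, which the closed forms \<open>a\<close>, \<open>b\<close>, \<open>c\<close> satisfy.
  These coefficients are nonnegative, so the sign of the \<open>i\<close>-th derivative is that of its constant
  prefactor, which gives complete monotonicity and the Bernstein property.
\<close>

lemma has_real_derivative_mult_powr:
  fixes p :: "real \<Rightarrow> real"
  assumes "(p has_real_derivative p') (at t)" and "t > 0"
  shows "((\<lambda>u. p u * u powr a * (1 + u) powr b) has_real_derivative
           (p' * t * (1 + t) + p t * (a * (1 + t) + b * t)) * t powr (a - 1) * (1 + t) powr (b - 1)) (at t)"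
proof -
  have "t powr a = t * t powr (a - 1)" "(1 + t) powr b = (1 + t) * (1 + t) powr (b - 1)"
    using \<open>t > 0\<close> by (simp_all add: powr_diff)
  with assms show ?thesis
    by (auto intro!: derivative_eq_intros simp: algebra_simps)
qed

locale powr_derivative_family =
  fixes f :: "real \<Rightarrow> real" and p p' :: "nat \<Rightarrow> real \<Rightarrow> real" and a b :: real
  assumes f_eq: "t > 0 \<Longrightarrow> f t = p 0 t * t powr a * (1 + t) powr b"
    and p_deriv: "t > 0 \<Longrightarrow> (p i has_real_derivative p' i t) (at t)"
    and p_Suc: "t > 0 \<Longrightarrow>
      p (Suc i) t = p' i t * t * (1 + t) + p i t * ((a - i) * (1 + t) + (b - i) * t)"
begin

lemma has_real_derivative_step:
  assumes g: "\<And>u. u > 0 \<Longrightarrow> g u = p i u * u powr (a - i) * (1 + u) powr (b - i)" and "t > 0"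
  shows "(g has_real_derivative p (Suc i) t * t powr (a - Suc i) * (1 + t) powr (b - Suc i)) (at t)"
proof (rule has_field_derivative_transform_within_open[where S = "{0<..}"])
  show "((\<lambda>u. p i u * u powr (a - i) * (1 + u) powr (b - i)) has_real_derivative
          p (Suc i) t * t powr (a - Suc i) * (1 + t) powr (b - Suc i)) (at t)"
    using has_real_derivative_mult_powr[OF p_deriv[OF \<open>t > 0\<close>] \<open>t > 0\<close>, of i "a - i" "b - i"]
    by (simp add: p_Suc[OF \<open>t > 0\<close>] diff_diff_add add.commute)
qed (use assms in auto)

lemma higher_deriv_eq: "t > 0 \<Longrightarrow> (deriv ^^ i) f t = p i t * t powr (a - i) * (1 + t) powr (b - i)"
proof (induction i arbitrary: t)
  case 0
  then show ?case by (simp add: f_eq)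
next
  case (Suc i)
  then show ?case
    using has_real_derivative_step[OF Suc.IH] by (simp add: DERIV_imp_deriv)
qed

lemma higher_deriv_differentiable: "t > 0 \<Longrightarrow> (deriv ^^ i) f differentiable (at t)"
  using has_real_derivative_step[OF higher_deriv_eq] real_differentiable_def by blast

lemma completely_monotonic:
  assumes "\<And>i t. t > 0 \<Longrightarrow> (-1) ^ i * p i t \<ge> 0"
  shows "completely_monotonic_on {0<..} f"
  unfolding completely_monotonic_on_def
proof (intro conjI allI ballI)
  fix i and t :: real
  assume "t \<in> {0<..}"
  then have "t > 0" by simp
  then show "(deriv ^^ i) f differentiable (at t)"
    by (rule higher_deriv_differentiable)
  show "(-1) ^ i * (deriv ^^ i) f t \<ge> 0"
    using assms[OF \<open>t > 0\<close>, of i] \<open>t > 0\<close> by (simp add: higher_deriv_eq mult.assoc[symmetric])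
qed

lemma bernstein:
  assumes "\<And>t. t > 0 \<Longrightarrow> p 0 t \<ge> 0" and "\<And>i t. t > 0 \<Longrightarrow> (-1) ^ i * p (Suc i) t \<ge> 0"
  shows "bernstein_on {0<..} f"
proof -
  interpret derivative: powr_derivative_family "deriv f" "\<lambda>i. p (Suc i)" "\<lambda>i. p' (Suc i)" "a - 1" "b - 1"
  proof
    fix t :: real and i
    assume "t > 0"
    show "deriv f t = p (Suc 0) t * t powr (a - 1) * (1 + t) powr (b - 1)"
      using higher_deriv_eq[OF \<open>t > 0\<close>, of 1] by simp
    show "(p (Suc i) has_real_derivative p' (Suc i) t) (at t)"
      using p_deriv[OF \<open>t > 0\<close>] .
    show "p (Suc (Suc i)) t =
        p' (Suc i) t * t * (1 + t) + p (Suc i) t * ((a - 1 - i) * (1 + t) + (b - 1 - i) * t)"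
      using p_Suc[OF \<open>t > 0\<close>, of "Suc i"] by (simp add: algebra_simps)
  qed
  have "(deriv ^^ i) f differentiable (at t)" if "t > 0" for i t
    using that by (rule higher_deriv_differentiable)
  moreover have "f t \<ge> 0" if "t > 0" for t
    using assms(1)[OF that] that by (simp add: f_eq)
  ultimately show ?thesis
    unfolding bernstein_on_def using derivative.completely_monotonic[OF assms(2)] by auto
qed

end

lemma sum_power_recurrence:
  fixes c d u v :: "nat \<Rightarrow> real" and t :: real
  assumes "d 0 = u 0 * c 0"
    and "\<And>k. k < n \<Longrightarrow> d (Suc k) = u (Suc k) * c (Suc k) + v k * c k"
    and "d (Suc n) = v n * c n"
  shows "(\<Sum>k<Suc (Suc n). d k * t ^ k) = (\<Sum>k<Suc n. c k * (u k * t ^ k + v k * t ^ Suc k))"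
proof -
  have "(\<Sum>k<Suc (Suc n). d k * t ^ k) = d 0 + (\<Sum>k<n. d (Suc k) * t ^ Suc k) + d (Suc n) * t ^ Suc n"
    by (subst sum.lessThan_Suc, subst sum.lessThan_Suc_shift) simp
  also have "\<dots> = u 0 * c 0 + (\<Sum>k<n. u (Suc k) * c (Suc k) * t ^ Suc k)
      + (\<Sum>k<n. v k * c k * t ^ Suc k) + v n * c n * t ^ Suc n"
    using assms by (simp add: sum.distrib algebra_simps)
  also have "\<dots> = (\<Sum>k<Suc n. c k * u k * t ^ k) + (\<Sum>k<Suc n. c k * v k * t ^ Suc k)"
    by (simp only: sum.lessThan_Suc_shift[of "\<lambda>k. c k * u k * t ^ k"]
        sum.lessThan_Suc[of "\<lambda>k. c k * v k * t ^ Suc k"]) (simp add: algebra_simps)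
  also have "\<dots> = (\<Sum>k<Suc n. c k * (u k * t ^ k + v k * t ^ Suc k))"
    by (simp add: sum.distrib algebra_simps)
  finally show ?thesis .
qed

lemma sum_power_derivative_combination:
  fixes c :: "nat \<Rightarrow> real" and t \<alpha> \<beta> :: real
  shows "(\<Sum>k<m. c k * (real k * t ^ (k - 1))) * t * (1 + t) + (\<Sum>k<m. c k * t ^ k) * (\<alpha> * (1 + t) + \<beta> * t)
       = (\<Sum>k<m. c k * ((k + \<alpha>) * t ^ k + (k + \<alpha> + \<beta>) * t ^ Suc k))"
proof -
  have "c k * (real k * t ^ (k - 1)) * t * (1 + t) + c k * t ^ k * (\<alpha> * (1 + t) + \<beta> * t)
      = c k * ((k + \<alpha>) * t ^ k + (k + \<alpha> + \<beta>) * t ^ Suc k)" for k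
    by (cases k) (simp_all add: algebra_simps)
  then show ?thesis
    by (simp add: sum_distrib_right flip: sum.distrib)
qed

text \<open>
  The hypotheses on \<open>c\<close> are the locale's recurrence \<open>p_Suc\<close> read off coefficientwise for
  \<open>p i t = \<sigma> (-1)^i / 2^i * (\<Sum>k<i. c i k * t^k)\<close>. Only \<open>p 0\<close> is left free, as this sum is empty for
  \<open>i = 0\<close>.
\<close>
lemma powr_derivative_family_from_coeffs:
  fixes c :: "nat \<Rightarrow> nat \<Rightarrow> real" and a b \<sigma> :: real
  assumes f_eq: "\<And>t. t > 0 \<Longrightarrow> f t = p 0 t * t powr a * (1 + t) powr b"
    and p0_deriv: "\<And>t. t > 0 \<Longrightarrow> (p 0 has_real_derivative p' 0 t) (at t)"
    and p_Suc: "\<And>i t. p (Suc i) t = \<sigma> * (-1) ^ Suc i / 2 ^ Suc i * (\<Sum>k<Suc i. c (Suc i) k * t ^ k)"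
    and p'_Suc: "\<And>i t. p' (Suc i) t =
      \<sigma> * (-1) ^ Suc i / 2 ^ Suc i * (\<Sum>k<Suc i. c (Suc i) k * (real k * t ^ (k - 1)))"
    and p_1: "\<And>t. t > 0 \<Longrightarrow> p 1 t = p' 0 t * t * (1 + t) + p 0 t * (a * (1 + t) + b * t)"
    and c_0: "\<And>n. c (Suc (Suc n)) 0 = -2 * (a - Suc n) * c (Suc n) 0"
    and c_Suc: "\<And>n k. k < n \<Longrightarrow> c (Suc (Suc n)) (Suc k) =
      -2 * ((Suc k + a - Suc n) * c (Suc n) (Suc k) + (k + a + b - 2 * Suc n) * c (Suc n) k)"
    and c_last: "\<And>n. c (Suc (Suc n)) (Suc n) = -2 * (n + a + b - 2 * Suc n) * c (Suc n) n"
  shows "powr_derivative_family f p p' a b"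
proof
  fix t :: real and i
  assume t: "t > 0"
  show "f t = p 0 t * t powr a * (1 + t) powr b"
    using t by (rule f_eq)
  show "(p i has_real_derivative p' i t) (at t)"
  proof (cases i)
    case 0
    then show ?thesis using p0_deriv[OF t] by simp
  next
    case (Suc n)
    have "p (Suc n) = (\<lambda>t. \<sigma> * (-1) ^ Suc n / 2 ^ Suc n * (\<Sum>k<Suc n. c (Suc n) k * t ^ k))"
      using p_Suc by blast
    then have "(p (Suc n) has_real_derivative p' (Suc n) t) (at t)"
      by (auto intro!: derivative_eq_intros simp: p'_Suc mult_ac)
    then show ?thesis
      using Suc by simp
  qed
  show "p (Suc i) t = p' i t * t * (1 + t) + p i t * ((a - i) * (1 + t) + (b - i) * t)"
  proof (cases i)
    case 0
    then show ?thesis using p_1[OF t] by simp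
  next
    case (Suc n)
    let ?\<alpha> = "a - Suc n" and ?\<beta> = "b - Suc n"
    have "(\<Sum>k<Suc (Suc n). c (Suc (Suc n)) k * t ^ k) =
        (\<Sum>k<Suc n. c (Suc n) k * (-2 * (k + ?\<alpha>) * t ^ k + -2 * (k + ?\<alpha> + ?\<beta>) * t ^ Suc k))"
      by (rule sum_power_recurrence) (use c_0 c_Suc c_last in \<open>auto simp: algebra_simps\<close>)
    also have "\<dots> = -2 * (\<Sum>k<Suc n. c (Suc n) k * ((k + ?\<alpha>) * t ^ k + (k + ?\<alpha> + ?\<beta>) * t ^ Suc k))"
      unfolding sum_distrib_left by (rule sum.cong) (simp_all add: algebra_simps)
    also have "\<dots> = -2 * ((\<Sum>k<Suc n. c (Suc n) k * (real k * t ^ (k - 1))) * t * (1 + t)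
        + (\<Sum>k<Suc n. c (Suc n) k * t ^ k) * (?\<alpha> * (1 + t) + ?\<beta> * t))"
      by (simp only: sum_power_derivative_combination)
    finally have recurrence: "(\<Sum>k<Suc (Suc n). c (Suc (Suc n)) k * t ^ k) =
      -2 * ((\<Sum>k<Suc n. c (Suc n) k * (real k * t ^ (k - 1))) * t * (1 + t)
        + (\<Sum>k<Suc n. c (Suc n) k * t ^ k) * (?\<alpha> * (1 + t) + ?\<beta> * t))" .
    show ?thesis
      unfolding Suc p_Suc p'_Suc recurrence power_Suc[of _ "Suc n"] by (simp add: field_simps)
  qed
qed

lemma odd_dfact_Suc: "real (odd_dfact (Suc m)) = (2 * real m + 1) * real (odd_dfact m)"
  by (simp add: odd_dfact_def algebra_simps)

lemma odd_dfact_pos: "odd_dfact m > 0"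
  by (simp add: odd_dfact_def)

text \<open>The coefficients with the truncated subtractions resolved, writing \<open>i = k + j + 1\<close>.\<close>

lemma coeff_a_eq_fact: "i = Suc (k + j) \<Longrightarrow> coeff_a i k =
    fact (k + j) * fact (Suc (k + j)) * real (odd_dfact (Suc j)) / (fact j * fact (Suc j) * fact k) * 2 ^ k"
  by (simp add: coeff_a_def del: fact_Suc)

lemma coeff_b_eq_fact: "i = Suc (k + j) \<Longrightarrow> coeff_b i k =
    fact (k + j) * fact (Suc (k + j)) * real (odd_dfact j) / (fact j * fact (Suc j) * fact k) * 2 ^ k"
  by (simp add: coeff_b_def del: fact_Suc)

lemma coeff_c_eq_fact: "i = Suc (k + j) \<Longrightarrow> coeff_c i k =
    fact (k + j) * fact (Suc (Suc (k + j))) * real (odd_dfact (Suc j))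
      / (fact j * fact (Suc (Suc j)) * fact k) * 2 ^ k"
  by (simp add: coeff_c_def Suc_diff_le del: fact_Suc)

lemma coeff_a_Suc_Suc_0: "coeff_a (Suc (Suc n)) 0 = (2 * n + 3) * coeff_a (Suc n) 0"
  by (simp add: coeff_a_eq_fact[of _ 0 "Suc n"] coeff_a_eq_fact[of _ 0 n] fact_Suc odd_dfact_Suc)

lemma coeff_a_Suc_Suc_last: "coeff_a (Suc (Suc n)) (Suc n) = (2 * n + 4) * coeff_a (Suc n) n"
  by (simp add: coeff_a_eq_fact[of _ "Suc n" 0] coeff_a_eq_fact[of _ n 0] fact_Suc odd_dfact_Suc)

lemma coeff_a_Suc_Suc:
  assumes "k < n"
  shows "coeff_a (Suc (Suc n)) (Suc k) =
    (2 * n + 1 - 2 * k) * coeff_a (Suc n) (Suc k) + (4 * n + 4 - 2 * k) * coeff_a (Suc n) k"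
proof -
  obtain j where n: "n = Suc (k + j)"
    using assms less_iff_Suc_add by auto
  show ?thesis
    using odd_dfact_pos[of j]
    by (simp add: n coeff_a_eq_fact[of _ "Suc k" "Suc j"] coeff_a_eq_fact[of _ "Suc k" j]
        coeff_a_eq_fact[of _ k "Suc j"] fact_Suc odd_dfact_Suc divide_simps) algebra
qed

lemma coeff_b_Suc_Suc_0: "coeff_b (Suc (Suc n)) 0 = (2 * n + 1) * coeff_b (Suc n) 0"
  by (simp add: coeff_b_eq_fact[of _ 0 "Suc n"] coeff_b_eq_fact[of _ 0 n] fact_Suc odd_dfact_Suc)

lemma coeff_b_Suc_Suc_last: "coeff_b (Suc (Suc n)) (Suc n) = (2 * n + 4) * coeff_b (Suc n) n"
  by (simp add: coeff_b_eq_fact[of _ "Suc n" 0] coeff_b_eq_fact[of _ n 0] fact_Suc odd_dfact_Suc)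

lemma coeff_b_Suc_Suc:
  assumes "k < n"
  shows "coeff_b (Suc (Suc n)) (Suc k) =
    (2 * n - 1 - 2 * k) * coeff_b (Suc n) (Suc k) + (4 * n + 4 - 2 * k) * coeff_b (Suc n) k"
proof -
  obtain j where n: "n = Suc (k + j)"
    using assms less_iff_Suc_add by auto
  show ?thesis
    using odd_dfact_pos[of j]
    by (simp add: n coeff_b_eq_fact[of _ "Suc k" "Suc j"] coeff_b_eq_fact[of _ "Suc k" j]
        coeff_b_eq_fact[of _ k "Suc j"] fact_Suc odd_dfact_Suc divide_simps) algebra
qed

lemma coeff_c_Suc_Suc_0: "coeff_c (Suc (Suc n)) 0 = (2 * n + 3) * coeff_c (Suc n) 0"
  by (simp add: coeff_c_eq_fact[of _ 0 "Suc n"] coeff_c_eq_fact[of _ 0 n] fact_Suc odd_dfact_Suc)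

lemma coeff_c_Suc_Suc_last: "coeff_c (Suc (Suc n)) (Suc n) = (2 * n + 6) * coeff_c (Suc n) n"
  by (simp add: coeff_c_eq_fact[of _ "Suc n" 0] coeff_c_eq_fact[of _ n 0] fact_Suc odd_dfact_Suc)

lemma coeff_c_Suc_Suc:
  assumes "k < n"
  shows "coeff_c (Suc (Suc n)) (Suc k) =
    (2 * n + 1 - 2 * k) * coeff_c (Suc n) (Suc k) + (4 * n + 6 - 2 * k) * coeff_c (Suc n) k"
proof -
  obtain j where n: "n = Suc (k + j)"
    using assms less_iff_Suc_add by auto
  show ?thesis
    using odd_dfact_pos[of j]
    by (simp add: n coeff_c_eq_fact[of _ "Suc k" "Suc j"] coeff_c_eq_fact[of _ "Suc k" j]
        coeff_c_eq_fact[of _ k "Suc j"] fact_Suc odd_dfact_Suc divide_simps) algebra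
qed

lemma sqrt_one_plus_inverse:
  fixes t :: real
  assumes "t > 0"
  shows "sqrt (1 + 1 / t) = sqrt (1 + t) / sqrt t"
  using assms by (simp add: field_simps flip: real_sqrt_divide)

lemma sqrt_one_plus_inverse_eq_powr:
  fixes t :: real
  assumes "t > 0"
  shows "sqrt (1 + 1 / t) = t powr (-1/2) * (1 + t) powr (1/2)"
  using assms by (simp add: sqrt_one_plus_inverse powr_half_sqrt powr_minus_divide)

lemma powr_half_eq_divide_sqrt:
  fixes t :: real
  assumes "t > 0"
  shows "t powr (1/2 - p) * (1 + t) powr (-1/2 - q) = 1 / (t ^ p * (1 + t) ^ q * sqrt (1 + 1 / t))"
proof -
  have "t powr (1/2 - p) * (1 + t) powr (-1/2 - q) = sqrt t / t ^ p * (1 / (sqrt (1 + t) * (1 + t) ^ q))"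
    using assms by (simp add: powr_diff powr_half_sqrt powr_realpow powr_minus_divide)
  also have "\<dots> = 1 / (t ^ p * (1 + t) ^ q * (sqrt (1 + t) / sqrt t))"
    using assms by (simp add: field_simps)
  also have "sqrt (1 + t) / sqrt t = sqrt (1 + 1 / t)"
    using assms by (simp add: sqrt_one_plus_inverse)
  finally show ?thesis .
qed

lemma sqrt_one_plus_inverse_add_inverse:
  fixes t :: real
  assumes "t > 0"
  shows "sqrt (1 + 1 / t) + 1 / sqrt (1 + 1 / t) = (1 + 2 * t) * t powr (-1/2) * (1 + t) powr (-1/2)"
proof -
  have "t powr (-1/2) * (1 + t) powr (-1/2) = 1 / (t * sqrt (1 + 1 / t))"
    using powr_half_eq_divide_sqrt[OF assms, of 1 0] by simp
  moreover have "sqrt (1 + 1 / t) ^ 2 = 1 + 1 / t"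
    using assms by simp
  ultimately show ?thesis
    using assms by (simp add: field_simps power2_eq_square)
qed

interpretation sqrt_family: powr_derivative_family "\<lambda>t. sqrt (1 + 1 / t)"
  "\<lambda>i t. if i = 0 then 1 else (-1) ^ i / 2 ^ i * (\<Sum>k<i. coeff_a i k * t ^ k)"
  "\<lambda>i t. if i = 0 then 0 else (-1) ^ i / 2 ^ i * (\<Sum>k<i. coeff_a i k * (real k * t ^ (k - 1)))"
  "-1/2" "1/2"
  by (rule powr_derivative_family_from_coeffs[where \<sigma> = 1 and c = coeff_a])
    (simp_all add: sqrt_one_plus_inverse_eq_powr coeff_a_def[of "Suc 0" 0] odd_dfact_def
      coeff_a_Suc_Suc_0 coeff_a_Suc_Suc coeff_a_Suc_Suc_last algebra_simps)

interpretation inverse_sqrt_family: powr_derivative_family "\<lambda>t. 1 / sqrt (1 + 1 / t)"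
  "\<lambda>i t. if i = 0 then 1 else (-1) ^ (i + 1) / 2 ^ i * (\<Sum>k<i. coeff_b i k * t ^ k)"
  "\<lambda>i t. if i = 0 then 0 else (-1) ^ (i + 1) / 2 ^ i * (\<Sum>k<i. coeff_b i k * (real k * t ^ (k - 1)))"
  "1/2" "-1/2"
  by (rule powr_derivative_family_from_coeffs[where \<sigma> = "-1" and c = coeff_b])
    (simp_all add: powr_half_eq_divide_sqrt[of _ 0 0, simplified, symmetric] coeff_b_def[of "Suc 0" 0]
      odd_dfact_def coeff_b_Suc_Suc_0 coeff_b_Suc_Suc coeff_b_Suc_Suc_last algebra_simps)

interpretation sqrt_add_inverse_family: powr_derivative_family
  "\<lambda>t. sqrt (1 + 1 / t) + 1 / sqrt (1 + 1 / t)"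
  "\<lambda>i t. if i = 0 then 1 + 2 * t else (-1) ^ i / 2 ^ i * (\<Sum>k<i. coeff_c i k * t ^ k)"
  "\<lambda>i t. if i = 0 then 2 else (-1) ^ i / 2 ^ i * (\<Sum>k<i. coeff_c i k * (real k * t ^ (k - 1)))"
  "-1/2" "-1/2"
  by (rule powr_derivative_family_from_coeffs[where \<sigma> = 1 and c = coeff_c])
    (auto intro!: derivative_eq_intros simp: sqrt_one_plus_inverse_add_inverse coeff_c_def[of "Suc 0" 0]
      odd_dfact_def coeff_c_Suc_Suc_0 coeff_c_Suc_Suc coeff_c_Suc_Suc_last algebra_simps)

lemma higher_deriv_sqrt_one_plus_inverse:
  assumes "i \<ge> 1" and "t > 0"
  shows "(deriv ^^ i) (\<lambda>t. sqrt (1 + 1 / t)) t =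
    (-1) ^ i / (2 ^ i * t ^ (i + 1) * (1 + t) ^ (i - 1) * sqrt (1 + 1 / t)) * (\<Sum>k<i. coeff_a i k * t ^ k)"
proof -
  have "-1/2 - real i = 1/2 - real (i + 1)" "1/2 - real i = -1/2 - real (i - 1)"
    using assms(1) by (simp_all add: of_nat_diff)
  then show ?thesis
    using sqrt_family.higher_deriv_eq[OF assms(2), of i]
      powr_half_eq_divide_sqrt[OF assms(2), of "i + 1" "i - 1"] assms(1)
    by (simp add: mult.assoc)
qed

lemma higher_deriv_inverse_sqrt_one_plus_inverse:
  assumes "i \<ge> 1" and "t > 0"
  shows "(deriv ^^ i) (\<lambda>t. 1 / sqrt (1 + 1 / t)) t =
    (-1) ^ (i + 1) / (2 ^ i * t ^ i * (1 + t) ^ i * sqrt (1 + 1 / t)) * (\<Sum>k<i. coeff_b i k * t ^ k)"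
  using inverse_sqrt_family.higher_deriv_eq[OF assms(2), of i]
    powr_half_eq_divide_sqrt[OF assms(2), of i i] assms(1)
  by (simp add: mult.assoc)

lemma higher_deriv_sqrt_add_inverse:
  assumes "i \<ge> 1" and "t > 0"
  shows "(deriv ^^ i) (\<lambda>t. sqrt (1 + 1 / t) + 1 / sqrt (1 + 1 / t)) t =
    (-1) ^ i / (2 ^ i * t ^ (i + 1) * (1 + t) ^ i * sqrt (1 + 1 / t)) * (\<Sum>k<i. coeff_c i k * t ^ k)"
proof -
  have "-1/2 - real i = 1/2 - real (i + 1)"
    by simp
  then show ?thesis
    using sqrt_add_inverse_family.higher_deriv_eq[OF assms(2), of i]
      powr_half_eq_divide_sqrt[OF assms(2), of "i + 1" i] assms(1)
    by (simp add: mult.assoc)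
qed

lemma minus_one_power_mult_same: "(-1) ^ n * ((-1) ^ n * x) = (x :: real)"
  by (simp flip: mult.assoc power_mult_distrib)

theorem lemma2p1:
  fixes h H :: "real \<Rightarrow> real"
  assumes h_def: "h = (\<lambda>t. sqrt (1 + 1 / t))"
      and H_def: "H = (\<lambda>t. h t + 1 / h t)"
  shows "(\<forall>i\<ge>1. \<forall>t>0. (deriv ^^ i) h t =
            (-1) ^ i / (2 ^ i * t ^ (i + 1) * (1 + t) ^ (i - 1) * h t)
              * (\<Sum>k<i. coeff_a i k * t ^ k))
       \<and> (\<forall>i\<ge>1. \<forall>t>0. (deriv ^^ i) (\<lambda>x. 1 / h x) t =
            (-1) ^ (i + 1) / (2 ^ i * t ^ i * (1 + t) ^ i * h t)
              * (\<Sum>k<i. coeff_b i k * t ^ k))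
       \<and> (\<forall>i\<ge>1. \<forall>t>0. (deriv ^^ i) H t =
            (-1) ^ i / (2 ^ i * t ^ (i + 1) * (1 + t) ^ i * h t)
              * (\<Sum>k<i. coeff_c i k * t ^ k))
       \<and> completely_monotonic_on {0<..} h
       \<and> completely_monotonic_on {0<..} H
       \<and> bernstein_on {0<..} (\<lambda>t. 1 / h t)"
proof -
  have H_eq: "H = (\<lambda>t. sqrt (1 + 1 / t) + 1 / sqrt (1 + 1 / t))"
    using H_def h_def by simp
  have sums_nonneg: "0 \<le> (\<Sum>k<i. coeff_a i k * t ^ k)" "0 \<le> (\<Sum>k<i. coeff_b i k * t ^ k)"
      "0 \<le> (\<Sum>k<i. coeff_c i k * t ^ k)" if "t > 0" for i t
    using that by (auto simp: coeff_a_def coeff_b_def coeff_c_def intro!: sum_nonneg)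
  have "completely_monotonic_on {0<..} h"
    unfolding h_def by (rule sqrt_family.completely_monotonic)
      (simp add: minus_one_power_mult_same sums_nonneg del: sum.lessThan_Suc)
  moreover have "completely_monotonic_on {0<..} H"
    unfolding H_eq by (rule sqrt_add_inverse_family.completely_monotonic)
      (simp add: minus_one_power_mult_same sums_nonneg del: sum.lessThan_Suc)
  moreover have "bernstein_on {0<..} (\<lambda>t. 1 / h t)"
    unfolding h_def by (rule inverse_sqrt_family.bernstein)
      (simp_all add: minus_one_power_mult_same sums_nonneg del: sum.lessThan_Suc)
  ultimately show ?thesis
    using higher_deriv_sqrt_one_plus_inverse higher_deriv_inverse_sqrt_one_plus_inverse
      higher_deriv_sqrt_add_inverse
    unfolding H_eq h_def by blast
qed

end
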